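(* For every $N\in\mathbb N$, every $j_0\in\mathbb Z^d$ and every $(\varepsilon,\lambda)\in[0,\varepsilon_0]\times\Lambda$, setting $\mathtt M:=|B^0_{2,N}(j_0;\varepsilon,\lambda)|$, one has $B^0_N(j_0;\varepsilon,\lambda)\subset\bigcup_{q=1}^{2\mathtt MN^\tau}I_q$ where the $I_q$ are intervals with $|I_q|\leq N^{-\tau}$.
   Context: Setting. $d,\nu\geq1$; $|l|,|j|$ max norms, $\|j\|^2=\sum j_i^2$. $\bar\omega\in\mathbb R^\nu$, $|\bar\omega|\leq1$; $\Lambda=[1/2,3/2]$; $\tau>0$ a parameter; $\varepsilon_0>0$. $V\in C^r(\mathbb T^d;\mathbb R)$, $m$ its average, $V_0=V-m$. $f\in C^r(\mathbb T^\nu\times\mathbb T^d\times\mathbb R;\mathbb R)$, $(\varepsilon,\lambda)\mapsto u^+(\varepsilon,\lambda)\in H^s(\mathbb T^{\nu}\times\mathbb T^d;\mathbb C)$ ($s>(d+\nu)/2$), $p=f(\cdot,|u^+|^2)+f'(\cdot,|u^+|^2)|u^+|^2$, $q=f'(\cdot,|u^+|^2)(u^+)^2$ ($f'$ = derivative in the last variable). $T_1$ is the matrix of multiplication by $\begin{pmatrix}p&q\\\bar q&p\end{pmatrix}$ in the Fourier basis $e_{(l,j),a}$ ($a\in\{0,1\}$ labels the component). With $\omega=\lambda\bar\omega$, $A(\varepsilon,\lambda,\theta)=D+T_2-\varepsilon T_1+\theta Y$ (indexed by $(l,j,a)$), where $D$ is diagonal with entries $-\omega\cdot l+\|j\|^2+m$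 ($a=0$), $\omega\cdot l+\|j\|^2+m$ ($a=1$), $Y$ diagonal with entries $-1$ ($a=0$), $+1$ ($a=1$), and $T_2$ the matrix of multiplication by $V_0$ in each component. $A_{N,j_0}(\varepsilon,\lambda,\theta)$ is the (self-adjoint) restriction of $A$ to indices with $|l|\leq N$, $|j-j_0|\leq N$; $\|\cdot\|_0$ is the $L^2$ operator norm ($=+\infty$ for the inverse of a non-invertible matrix). $B^0_N(j_0;\varepsilon,\lambda):=\{\theta\in\mathbb R:\|A_{N,j_0}^{-1}(\varepsilon,\lambda,\theta)\|_0>N^\tau\}$ and $B^0_{2,N}(j_0;\varepsilon,\lambda):=\{\theta\in\mathbb R:\|A_{N,j_0}^{-1}(\varepsilon,\lambda,\theta)\|_0>N^\tau/2\}$; $|\cdot|$ denotes Lebesgue measure. *)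

theory Defs
  imports "HOL-Analysis.Analysis"
begin

definition maxnorm :: "('a::{linorder,abs})^'n \<Rightarrow> 'a" where
  "maxnorm x = Max (range (\<lambda>i. \<bar>x $ i\<bar>))"

definition sqnorm :: "(int^'n) \<Rightarrow> int" where
  "sqnorm j = (\<Sum>i\<in>UNIV. (j $ i)^2)"

definition rdot :: "(real^'n) \<Rightarrow> (int^'n) \<Rightarrow> real" where
  "rdot w l = (\<Sum>i\<in>UNIV. w $ i * of_int (l $ i))"

text \<open>Fundamental domain [0,2pi]^n of the torus T^n = (R/2piZ)^n.\<close>
definition torus_box :: "((real^'n)) set" where
  "torus_box = {x. \<forall>i. 0 \<le> x $ i \<and> x $ i \<le> 2 * pi}"

text \<open>A function on R^n is 2pi-periodic in every variable (i.e. a function on T^n).\<close>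
definition torus_periodic :: "((real^'n) \<Rightarrow> 'b) \<Rightarrow> bool" where
  "torus_periodic g \<longleftrightarrow> (\<forall>x i. g (x + (2 * pi) *\<^sub>R axis i 1) = g x)"

text \<open>Functions on T^nu x T^d x R (last variable free).\<close>
definition periodic_fun3 :: "((real^'m) \<times> (real^'n) \<times> real \<Rightarrow> 'b) \<Rightarrow> bool" where
  "periodic_fun3 g \<longleftrightarrow> (\<forall>\<phi> x t. torus_periodic (\<lambda>\<phi>'. g (\<phi>', x, t)) \<and> torus_periodic (\<lambda>x'. g (\<phi>, x', t)))"

definition periodic_fun2 :: "((real^'m) \<times> (real^'n) \<Rightarrow> 'b) \<Rightarrow> bool" where
  "periodic_fun2 g \<longleftrightarrow> (\<forall>\<phi> x. torus_periodic (\<lambda>\<phi>'. g (\<phi>', x)) \<and> torus_periodic (\<lambda>x'. g (\<phi>, x')))"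

definition torus_avg :: "((real^'n) \<Rightarrow> real) \<Rightarrow> real" where
  "torus_avg g = (LINT x : torus_box | lborel. g x) / (2 * pi) ^ CARD('n)"

definition fourier2 :: "((real^'m) \<times> (real^'n) \<Rightarrow> complex) \<Rightarrow> (int^'m) \<times> (int^'n) \<Rightarrow> complex" where
  "fourier2 g k =
     (LINT z : torus_box \<times> torus_box | lborel.
         g z * cis (- (rdot (fst z) (fst k) + rdot (snd z) (snd k))))
     / of_real ((2 * pi) ^ (CARD('m) + CARD('n)))"

definition partial_dir :: "'a::euclidean_space \<Rightarrow> ('a \<Rightarrow> 'b::real_normed_vector) \<Rightarrow> 'a \<Rightarrow> 'b" where
  "partial_dir b g x = vector_derivative (\<lambda>t. g (x + t *\<^sub>R b)) (at 0)"

fun Ck :: "nat \<Rightarrow> ('a::euclidean_space \<Rightarrow> 'b::real_normed_vector) \<Rightarrow> bool" where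
  "Ck 0 g = continuous_on UNIV g"
| "Ck (Suc k) g = (continuous_on UNIV g \<and>
      (\<forall>b\<in>Basis. (\<forall>x. (\<lambda>t. g (x + t *\<^sub>R b)) differentiable (at 0)) \<and> Ck k (partial_dir b g)))"

definition in_Hs :: "real \<Rightarrow> ((real^'m) \<times> (real^'n) \<Rightarrow> complex) \<Rightarrow> bool" where
  "in_Hs s u \<longleftrightarrow> periodic_fun2 u \<and> u \<in> borel_measurable lborel \<and>
     set_integrable lborel (torus_box \<times> torus_box) (\<lambda>z. (cmod (u z))^2) \<and>
     (\<lambda>k::(int^'m) \<times> (int^'n). (1 + real_of_int (sqnorm (fst k) + sqnorm (snd k))) powr s
                              * (cmod (fourier2 u k))^2) summable_on UNIV"

text \<open>Indices (l, j, a), l in Z^nu, j in Z^d, a in {0,1}.\<close>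
type_synonym ('m,'n) idx = "(int^'m) \<times> (int^'n) \<times> nat"

text \<open>Matrix (in the Fourier basis e_{(l,j),a}) of the multiplication operator by the
  2x2 matrix function [[P00,P01],[P10,P11]] on T^nu x T^d.\<close>
definition mult_matrix ::
  "(nat \<Rightarrow> nat \<Rightarrow> ((real^'m) \<times> (real^'n) \<Rightarrow> complex)) \<Rightarrow> ('m,'n) idx \<Rightarrow> ('m,'n) idx \<Rightarrow> complex" where
  "mult_matrix P = (\<lambda>(l,j,a) (l',j',a'). fourier2 (P a a') (l - l', j - j'))"

definition dlast :: "((real^'m) \<times> (real^'n) \<times> real \<Rightarrow> real) \<Rightarrow> (real^'m) \<times> (real^'n) \<times> real \<Rightarrow> real" where
  "dlast f = (\<lambda>(\<phi>,x,t). deriv (\<lambda>t'. f (\<phi>,x,t')) t)"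

definition p_fun :: "((real^'m) \<times> (real^'n) \<times> real \<Rightarrow> real) \<Rightarrow> ((real^'m) \<times> (real^'n) \<Rightarrow> complex)
                      \<Rightarrow> (real^'m) \<times> (real^'n) \<Rightarrow> complex" where
  "p_fun f u = (\<lambda>(\<phi>,x). complex_of_real
      (f (\<phi>, x, (cmod (u (\<phi>,x)))^2) + dlast f (\<phi>, x, (cmod (u (\<phi>,x)))^2) * (cmod (u (\<phi>,x)))^2))"

definition q_fun :: "((real^'m) \<times> (real^'n) \<times> real \<Rightarrow> real) \<Rightarrow> ((real^'m) \<times> (real^'n) \<Rightarrow> complex)
                      \<Rightarrow> (real^'m) \<times> (real^'n) \<Rightarrow> complex" where
  "q_fun f u = (\<lambda>(\<phi>,x). complex_of_real (dlast f (\<phi>, x, (cmod (u (\<phi>,x)))^2)) * (u (\<phi>,x))^2)"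

definition T1 :: "((real^'m) \<times> (real^'n) \<times> real \<Rightarrow> real) \<Rightarrow> ((real^'m) \<times> (real^'n) \<Rightarrow> complex)
                   \<Rightarrow> ('m,'n) idx \<Rightarrow> ('m,'n) idx \<Rightarrow> complex" where
  "T1 f u = mult_matrix (\<lambda>a a'. if a = 0 \<and> a' = 0 then p_fun f u
                             else if a = 0 then q_fun f u
                             else if a' = 0 then (\<lambda>z. cnj (q_fun f u z))
                             else p_fun f u)"

definition T2 :: "((real^'n) \<Rightarrow> real) \<Rightarrow> ('m::finite,'n) idx \<Rightarrow> ('m,'n) idx \<Rightarrow> complex" where
  "T2 V = mult_matrix (\<lambda>a a'. if a = a' then (\<lambda>(\<phi>::(real^'m), x). complex_of_real (V x - torus_avg V))
                              else (\<lambda>_. 0))"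

text \<open>A(eps,lambda,theta) = D + T_2 - eps T_1 + theta Y, with omega = lambda * omegabar.\<close>
definition Amat :: "(real^'m) \<Rightarrow> ((real^'n) \<Rightarrow> real) \<Rightarrow> ((real^'m) \<times> (real^'n) \<times> real \<Rightarrow> real)
                    \<Rightarrow> ((real^'m) \<times> (real^'n) \<Rightarrow> complex) \<Rightarrow> real \<Rightarrow> real \<Rightarrow> real
                    \<Rightarrow> ('m,'n) idx \<Rightarrow> ('m,'n) idx \<Rightarrow> complex" where
  "Amat wbar V f u \<epsilon> lam \<theta> = (\<lambda>x y.
      (if x = y then
         (case x of (l,j,a) \<Rightarrow>
            complex_of_real ((if a = 0 then - rdot (lam *\<^sub>R wbar) l else rdot (lam *\<^sub>R wbar) l)
                             + of_int (sqnorm j) + torus_avg V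
                             + \<theta> * (if a = 0 then -1 else 1)))
       else 0)
      + T2 V x y - complex_of_real \<epsilon> * T1 f u x y)"

definition trunc_idx :: "nat \<Rightarrow> (int^'n::finite) \<Rightarrow> ('m::finite,'n) idx set" where
  "trunc_idx N j0 = {(l,j,a). maxnorm l \<le> int N \<and> maxnorm (j - j0) \<le> int N \<and> a \<in> {0,1}}"

definition l2norm_on :: "'i set \<Rightarrow> ('i \<Rightarrow> complex) \<Rightarrow> real" where
  "l2norm_on S v = sqrt (\<Sum>i\<in>S. (cmod (v i))^2)"

definition mat_apply_on :: "'i set \<Rightarrow> ('i \<Rightarrow> 'i \<Rightarrow> complex) \<Rightarrow> ('i \<Rightarrow> complex) \<Rightarrow> 'i \<Rightarrow> complex" where
  "mat_apply_on S M v = (\<lambda>i. \<Sum>k\<in>S. M i k * v k)"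

definition opnorm_on :: "'i set \<Rightarrow> ('i \<Rightarrow> 'i \<Rightarrow> complex) \<Rightarrow> real" where
  "opnorm_on S M = Sup {l2norm_on S (mat_apply_on S M v) | v. l2norm_on S v \<le> 1}"

definition is_inverse_on :: "'i set \<Rightarrow> ('i \<Rightarrow> 'i \<Rightarrow> complex) \<Rightarrow> ('i \<Rightarrow> 'i \<Rightarrow> complex) \<Rightarrow> bool" where
  "is_inverse_on S M B \<longleftrightarrow>
     (\<forall>i\<in>S. \<forall>k\<in>S. (\<Sum>z\<in>S. M i z * B z k) = (if i = k then 1 else 0)) \<and>
     (\<forall>i\<in>S. \<forall>k\<in>S. (\<Sum>z\<in>S. B i z * M z k) = (if i = k then 1 else 0))"

definition inv_norm_on :: "'i set \<Rightarrow> ('i \<Rightarrow> 'i \<Rightarrow> complex) \<Rightarrow> ereal" where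
  "inv_norm_on S M = (if \<exists>B. is_inverse_on S M B
                      then ereal (opnorm_on S (SOME B. is_inverse_on S M B)) else \<infinity>)"

definition B0 :: "real \<Rightarrow> (real^'m) \<Rightarrow> ((real^'n) \<Rightarrow> real) \<Rightarrow> ((real^'m) \<times> (real^'n) \<times> real \<Rightarrow> real)
                  \<Rightarrow> ((real^'m) \<times> (real^'n) \<Rightarrow> complex) \<Rightarrow> nat \<Rightarrow> (int^'n) \<Rightarrow> real \<Rightarrow> real \<Rightarrow> real set" where
  "B0 \<tau> wbar V f u N j0 \<epsilon> lam =
     {\<theta>. inv_norm_on (trunc_idx N j0 :: ('m,'n) idx set) (Amat wbar V f u \<epsilon> lam \<theta>) > ereal (real N powr \<tau>)}"

definition B02 :: "real \<Rightarrow> (real^'m) \<Rightarrow> ((real^'n) \<Rightarrow> real) \<Rightarrow> ((real^'m) \<times> (real^'n) \<times> real \<Rightarrow> real)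
                  \<Rightarrow> ((real^'m) \<times> (real^'n) \<Rightarrow> complex) \<Rightarrow> nat \<Rightarrow> (int^'n) \<Rightarrow> real \<Rightarrow> real \<Rightarrow> real set" where
  "B02 \<tau> wbar V f u N j0 \<epsilon> lam =
     {\<theta>. inv_norm_on (trunc_idx N j0 :: ('m,'n) idx set) (Amat wbar V f u \<epsilon> lam \<theta>) > ereal (real N powr \<tau> / 2)}"

end

theory Submission
  imports Defs "Jordan_Normal_Form.Determinant"
begin

text \<open>
  Write \<open>A(\<theta>) = A(0) + \<theta>Y\<close> with \<open>Y\<close> diagonal with entries \<open>\<plusminus>1\<close>. A perturbation argument
  shows that \<open>\<theta> \<mapsto> \<parallel>A(\<theta>)\<^sup>-\<^sup>1\<parallel>\<close> cannot jump: if \<open>\<parallel>A(\<theta>')\<^sup>-\<^sup>1\<parallel> \<le> c\<close> and \<open>\<bar>\<theta> - \<theta>'\<bar> c < 1\<close> then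
  \<open>\<parallel>A(\<theta>)\<^sup>-\<^sup>1\<parallel> \<le> c / (1 - \<bar>\<theta> - \<theta>'\<bar> c)\<close>. Hence, with \<open>c = N\<^sup>\<tau>/2\<close>, the whole interval of length
  \<open>N\<^sup>-\<^sup>\<tau>\<close> around a point of \<open>B\<^sup>0\<^sub>N\<close> lies in \<open>B\<^sup>0\<^sub>2\<^sub>,\<^sub>N\<close>. The same estimate makes \<open>B\<^sup>0\<^sub>2\<^sub>,\<^sub>N\<close> open, and
  \<open>A(\<theta>)\<close> is invertible with small inverse for large \<open>\<bar>\<theta>\<bar>\<close>, so it is also bounded.
  Cutting \<open>\<real>\<close> into cells of length \<open>N\<^sup>-\<^sup>\<tau>\<close>, the cells meeting \<open>B\<^sup>0\<^sub>N\<close> are disjoint subsets of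
  \<open>B\<^sup>0\<^sub>2\<^sub>,\<^sub>N\<close>, so there are at most \<open>\<bar>B\<^sup>0\<^sub>2\<^sub>,\<^sub>N\<bar> N\<^sup>\<tau>\<close> of them.
\<close>

lemma l2norm_on_eq_L2_set: "l2norm_on S v = L2_set (\<lambda>i. cmod (v i)) S"
  unfolding l2norm_on_def L2_set_def by simp

lemma l2norm_on_nonneg: "0 \<le> l2norm_on S v"
  unfolding l2norm_on_eq_L2_set by simp

lemma l2norm_on_cong: "(\<And>i. i \<in> S \<Longrightarrow> v i = w i) \<Longrightarrow> l2norm_on S v = l2norm_on S w"
  unfolding l2norm_on_eq_L2_set by (rule L2_set_cong) auto

lemma l2norm_on_eq_0_iff: "finite S \<Longrightarrow> l2norm_on S v = 0 \<longleftrightarrow> (\<forall>i\<in>S. v i = 0)"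
  unfolding l2norm_on_eq_L2_set by (simp add: L2_set_eq_0_iff)

lemma norm_le_l2norm_on: "finite S \<Longrightarrow> i \<in> S \<Longrightarrow> cmod (v i) \<le> l2norm_on S v"
  unfolding l2norm_on_eq_L2_set by (rule member_le_L2_set) auto

lemma l2norm_on_diff_le: "l2norm_on S (\<lambda>i. v i - w i) \<le> l2norm_on S v + l2norm_on S w"
proof -
  have "l2norm_on S (\<lambda>i. v i - w i) \<le> L2_set (\<lambda>i. cmod (v i) + cmod (w i)) S"
    unfolding l2norm_on_eq_L2_set by (rule L2_set_mono) (auto simp: norm_triangle_ineq4)
  also have "\<dots> \<le> l2norm_on S v + l2norm_on S w"
    unfolding l2norm_on_eq_L2_set by (rule L2_set_triangle_ineq)
  finally show ?thesis .
qed

lemma l2norm_on_mult: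
  assumes "\<And>i. i \<in> S \<Longrightarrow> cmod (d i) = r" "0 \<le> r"
  shows "l2norm_on S (\<lambda>i. d i * v i) = r * l2norm_on S v"
proof -
  have "l2norm_on S (\<lambda>i. d i * v i) = L2_set (\<lambda>i. r * cmod (v i)) S"
    unfolding l2norm_on_eq_L2_set by (rule L2_set_cong) (auto simp: norm_mult assms(1))
  also have "\<dots> = r * l2norm_on S v"
    unfolding l2norm_on_eq_L2_set by (simp add: L2_set_right_distrib assms(2))
  finally show ?thesis .
qed

definition diag_on :: "('i \<Rightarrow> complex) \<Rightarrow> 'i \<Rightarrow> 'i \<Rightarrow> complex" where
  "diag_on d i k = (if i = k then d i else 0)"

lemma mat_apply_on_cong:
  "(\<And>k. k \<in> S \<Longrightarrow> v k = w k) \<Longrightarrow> mat_apply_on S M v i = mat_apply_on S M w i"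
  unfolding mat_apply_on_def by (rule sum.cong) auto

lemma mat_apply_on_add:
  "mat_apply_on S (\<lambda>i k. A i k + E i k) v i = mat_apply_on S A v i + mat_apply_on S E v i"
  unfolding mat_apply_on_def by (simp add: distrib_right sum.distrib)

lemma mat_apply_on_scale: "mat_apply_on S M (\<lambda>k. c * v k) i = c * mat_apply_on S M v i"
  unfolding mat_apply_on_def by (simp add: sum_distrib_left mult_ac)

lemma mat_apply_on_diag_on:
  assumes "finite S" "i \<in> S"
  shows "mat_apply_on S (diag_on d) v i = d i * v i"
proof -
  have "mat_apply_on S (diag_on d) v i = (\<Sum>k\<in>S. if i = k then d i * v k else 0)"
    unfolding mat_apply_on_def diag_on_def by (intro sum.cong) auto
  thus ?thesis using assms by simp
qed

lemma l2norm_on_diag_on: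
  assumes "finite S" "\<And>i. i \<in> S \<Longrightarrow> cmod (d i) = r" "0 \<le> r"
  shows "l2norm_on S (mat_apply_on S (diag_on d) v) = r * l2norm_on S v"
proof -
  have "l2norm_on S (mat_apply_on S (diag_on d) v) = l2norm_on S (\<lambda>i. d i * v i)"
    by (rule l2norm_on_cong) (simp add: mat_apply_on_diag_on[OF assms(1)])
  also have "\<dots> = r * l2norm_on S v" by (rule l2norm_on_mult[OF assms(2,3)])
  finally show ?thesis .
qed

lemma l2norm_on_mat_apply_bounded:
  assumes "finite S" shows "\<exists>C. \<forall>v. l2norm_on S (mat_apply_on S M v) \<le> C * l2norm_on S v"
proof -
  define R where "R i = (\<Sum>k\<in>S. cmod (M i k))" for i
  have "cmod (mat_apply_on S M v i) \<le> R i * l2norm_on S v" for v i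
  proof -
    have "cmod (mat_apply_on S M v i) \<le> (\<Sum>k\<in>S. cmod (M i k) * cmod (v k))"
      unfolding mat_apply_on_def by (rule order_trans[OF norm_sum]) (simp add: norm_mult)
    also have "\<dots> \<le> (\<Sum>k\<in>S. cmod (M i k) * l2norm_on S v)"
      by (rule sum_mono) (simp add: norm_le_l2norm_on[OF assms] mult_left_mono)
    finally show ?thesis unfolding R_def by (simp add: sum_distrib_right)
  qed
  hence "l2norm_on S (mat_apply_on S M v) \<le> L2_set (\<lambda>i. R i * l2norm_on S v) S" for v
    unfolding l2norm_on_eq_L2_set by (intro L2_set_mono) auto
  also have "L2_set (\<lambda>i. R i * l2norm_on S v) S = L2_set R S * l2norm_on S v" for v
    by (simp add: L2_set_left_distrib l2norm_on_nonneg)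
  finally show ?thesis by blast
qed

lemma opnorm_on_bdd_above:
  assumes "finite S" shows "bdd_above {l2norm_on S (mat_apply_on S M v) | v. l2norm_on S v \<le> 1}"
proof -
  obtain C where C: "\<And>v. l2norm_on S (mat_apply_on S M v) \<le> C * l2norm_on S v"
    using l2norm_on_mat_apply_bounded[OF assms] by blast
  show ?thesis
  proof (rule bdd_aboveI[of _ "max C 0"], clarify)
    fix v assume "l2norm_on S v \<le> 1"
    hence "C * l2norm_on S v \<le> max C 0 * 1"
      using l2norm_on_nonneg[of S v] by (intro mult_mono) auto
    with C[of v] show "l2norm_on S (mat_apply_on S M v) \<le> max C 0" by linarith
  qed
qed

lemma l2norm_on_le_opnorm_on:
  assumes "finite S" "l2norm_on S v \<le> 1"
  shows "l2norm_on S (mat_apply_on S M v) \<le> opnorm_on S M"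
  unfolding opnorm_on_def using assms(2) by (intro cSup_upper[OF _ opnorm_on_bdd_above[OF assms(1)]]) blast

lemma opnorm_on_nonneg: "finite S \<Longrightarrow> 0 \<le> opnorm_on S M"
  by (rule order_trans[OF l2norm_on_nonneg l2norm_on_le_opnorm_on[of S "\<lambda>_. 0"]])
    (simp_all add: l2norm_on_def)

lemma l2norm_on_mat_apply_le:
  assumes S: "finite S"
  shows "l2norm_on S (mat_apply_on S M v) \<le> opnorm_on S M * l2norm_on S v"
proof (cases "l2norm_on S v = 0")
  case True
  hence "mat_apply_on S M v = (\<lambda>i. 0)"
    using l2norm_on_eq_0_iff[OF S] by (auto simp: mat_apply_on_def)
  hence "l2norm_on S (mat_apply_on S M v) = 0" by (simp add: l2norm_on_def)
  thus ?thesis by (simp add: opnorm_on_nonneg[OF S] l2norm_on_nonneg)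
next
  case False
  define n where "n = l2norm_on S v"
  have n: "n > 0" using False l2norm_on_nonneg[of S v] unfolding n_def by linarith
  define w where "w k = complex_of_real (1/n) * v k" for k
  have scale: "l2norm_on S (\<lambda>i. complex_of_real (1/n) * x i) = (1/n) * l2norm_on S x" for x
    by (rule l2norm_on_mult) (use n in \<open>simp_all add: norm_divide\<close>)
  have "l2norm_on S w = 1"
    unfolding w_def scale using n by (simp add: n_def)
  moreover have "mat_apply_on S M w = (\<lambda>i. complex_of_real (1/n) * mat_apply_on S M v i)"
    unfolding w_def by (rule ext) (rule mat_apply_on_scale)
  hence "l2norm_on S (mat_apply_on S M w) = (1/n) * l2norm_on S (mat_apply_on S M v)"
    by (simp only: scale)
  ultimately have "(1/n) * l2norm_on S (mat_apply_on S M v) \<le> opnorm_on S M"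
    using l2norm_on_le_opnorm_on[OF S, of w M] by simp
  thus ?thesis using n by (simp add: n_def field_simps)
qed

lemma opnorm_on_le:
  assumes "0 \<le> c" "\<And>v. l2norm_on S (mat_apply_on S M v) \<le> c * l2norm_on S v"
  shows "opnorm_on S M \<le> c"
  unfolding opnorm_on_def
proof (rule cSup_least)
  have "l2norm_on S (\<lambda>_. 0) \<le> 1" by (simp add: l2norm_on_def)
  thus "{l2norm_on S (mat_apply_on S M v) |v. l2norm_on S v \<le> 1} \<noteq> {}" by blast
next
  fix x assume "x \<in> {l2norm_on S (mat_apply_on S M v) |v. l2norm_on S v \<le> 1}"
  then obtain v where "x = l2norm_on S (mat_apply_on S M v)" "l2norm_on S v \<le> 1" by blast
  moreover have "c * l2norm_on S v \<le> c" using \<open>l2norm_on S v \<le> 1\<close> assms(1) by (rule mult_left_le)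
  ultimately show "x \<le> c" using assms(2)[of v] by linarith
qed

lemma is_inverse_on_sym: "is_inverse_on S A B \<Longrightarrow> is_inverse_on S B A"
  unfolding is_inverse_on_def by blast

lemma mat_apply_on_inverse:
  assumes "finite S" "is_inverse_on S A B" "i \<in> S"
  shows "mat_apply_on S B (mat_apply_on S A v) i = v i"
proof -
  have "mat_apply_on S B (mat_apply_on S A v) i = (\<Sum>k\<in>S. (\<Sum>z\<in>S. B i z * A z k) * v k)"
    unfolding mat_apply_on_def sum_distrib_left sum_distrib_right
    by (subst sum.swap) (simp add: mult_ac)
  also have "\<dots> = (\<Sum>k\<in>S. if i = k then v k else 0)"
    using assms(2,3) unfolding is_inverse_on_def by (intro sum.cong) auto
  also have "\<dots> = v i" using assms(1,3) by simp
  finally show ?thesis .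
qed

lemma inv_norm_on_eq_opnorm_on:
  assumes S: "finite S" and B: "is_inverse_on S M B"
  shows "inv_norm_on S M = ereal (opnorm_on S B)"
proof -
  let ?B = "SOME B. is_inverse_on S M B"
  have B': "is_inverse_on S M ?B" using someI[of "is_inverse_on S M", OF B] .
  have "mat_apply_on S ?B w i = mat_apply_on S B w i" if "i \<in> S" for w i
  proof -
    have "mat_apply_on S ?B w i = mat_apply_on S ?B (mat_apply_on S M (mat_apply_on S B w)) i"
      using mat_apply_on_inverse[OF S is_inverse_on_sym[OF B]] by (intro mat_apply_on_cong) simp
    also have "\<dots> = mat_apply_on S B w i" by (rule mat_apply_on_inverse[OF S B' that])
    finally show ?thesis .
  qed
  hence "opnorm_on S ?B = opnorm_on S B"
    unfolding opnorm_on_def by (simp cong: l2norm_on_cong)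
  thus ?thesis unfolding inv_norm_on_def using B by auto
qed

lemma inv_norm_on_le_iff:
  assumes S: "finite S"
  shows "inv_norm_on S M \<le> ereal K \<longleftrightarrow>
    (\<exists>B. is_inverse_on S M B \<and> 0 \<le> K \<and> (\<forall>w. l2norm_on S (mat_apply_on S B w) \<le> K * l2norm_on S w))"
proof
  assume le: "inv_norm_on S M \<le> ereal K"
  then obtain B where B: "is_inverse_on S M B" unfolding inv_norm_on_def by (auto split: if_splits)
  have "opnorm_on S B \<le> K" using le unfolding inv_norm_on_eq_opnorm_on[OF S B] by simp
  moreover have "l2norm_on S (mat_apply_on S B w) \<le> K * l2norm_on S w" for w
    using l2norm_on_mat_apply_le[OF S, of B w]
      mult_right_mono[OF \<open>opnorm_on S B \<le> K\<close> l2norm_on_nonneg[of S w]] by linarith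
  ultimately show "\<exists>B. is_inverse_on S M B \<and> 0 \<le> K \<and> (\<forall>w. l2norm_on S (mat_apply_on S B w) \<le> K * l2norm_on S w)"
    using B opnorm_on_nonneg[OF S, of B] by auto
next
  assume "\<exists>B. is_inverse_on S M B \<and> 0 \<le> K \<and> (\<forall>w. l2norm_on S (mat_apply_on S B w) \<le> K * l2norm_on S w)"
  then obtain B where B: "is_inverse_on S M B"
    and "0 \<le> K" "\<And>w. l2norm_on S (mat_apply_on S B w) \<le> K * l2norm_on S w"
    by blast
  hence "opnorm_on S B \<le> K" by (intro opnorm_on_le)
  thus "inv_norm_on S M \<le> ereal K" by (simp add: inv_norm_on_eq_opnorm_on[OF S B])
qed

lemma is_inverse_on_exists:
  assumes S: "finite S"
    and inj: "\<And>v. \<forall>i\<in>S. mat_apply_on S M v i = 0 \<Longrightarrow> \<forall>i\<in>S. v i = 0"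
  shows "\<exists>B. is_inverse_on S M B"
proof -
  define n where "n = card S"
  obtain e where e: "bij_betw e {0..<n} S" using ex_bij_betw_nat_finite[OF S] unfolding n_def by blast
  define g where "g = inv_into {0..<n} e"
  have g: "bij_betw g S {0..<n}" unfolding g_def by (rule bij_betw_inv_into[OF e])
  have ge: "g (e p) = p" if "p < n" for p
    unfolding g_def using bij_betw_inv_into_left[OF e] that by simp
  have eg: "e (g i) = i" if "i \<in> S" for i
    unfolding g_def using bij_betw_inv_into_right[OF e that] .
  have g_lt: "g i < n" if "i \<in> S" for i using bij_betwE[OF g] that by simp
  have g_eq: "g i = g k \<longleftrightarrow> i = k" if "i \<in> S" "k \<in> S" for i k
    using bij_betw_imp_inj_on[OF g] that by (auto dest: inj_onD)
  have mult_entry: "(\<Sum>z\<in>S. X $$ (g i, g z) * Y $$ (g z, g k)) = (X * Y) $$ (g i, g k)"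
    if "X \<in> carrier_mat n n" "Y \<in> carrier_mat n n" "i \<in> S" "k \<in> S" for X Y :: "complex Matrix.mat" and i k
    using that g_lt sum.reindex_bij_betw[OF g, of "\<lambda>r. X $$ (g i, r) * Y $$ (r, g k)"]
    by (simp add: scalar_prod_def Matrix.row_def col_def atLeast0LessThan)
  define A :: "complex Matrix.mat" where "A = Matrix.mat n n (\<lambda>(p, q). M (e p) (e q))"
  have A: "A \<in> carrier_mat n n" unfolding A_def by simp
  have M_eq: "M i k = A $$ (g i, g k)" if "i \<in> S" "k \<in> S" for i k
    using that g_lt eg unfolding A_def by simp
  have "Determinant.det A \<noteq> 0"
  proof
    assume "Determinant.det A = 0"
    then obtain w where w: "w \<in> carrier_vec n" "w \<noteq> 0\<^sub>v n" "A *\<^sub>v w = 0\<^sub>v n"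
      using det_0_iff_vec_prod_zero_field[OF A] by blast
    have Mw: "mat_apply_on S M (\<lambda>k. w $ g k) i = (A *\<^sub>v w) $ g i" if "i \<in> S" for i
    proof -
      have "mat_apply_on S M (\<lambda>k. w $ g k) i = (\<Sum>k\<in>S. A $$ (g i, g k) * w $ g k)"
        unfolding mat_apply_on_def using that by (intro sum.cong) (simp_all add: M_eq)
      also have "\<dots> = (\<Sum>q\<in>{0..<n}. A $$ (g i, q) * w $ q)"
        by (rule sum.reindex_bij_betw[OF g])
      also have "\<dots> = (A *\<^sub>v w) $ g i"
        using that g_lt w(1) A by (simp add: scalar_prod_def)
      finally show ?thesis .
    qed
    have "\<forall>i\<in>S. w $ g i = 0" by (rule inj) (use Mw w(3) g_lt in simp)
    hence "w $ q = 0" if "q < n" for q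
      using ge[OF that] bij_betwE[OF e] that by force
    hence "w = 0\<^sub>v n" using w(1) by (intro eq_vecI) auto
    with w(2) show False by simp
  qed
  hence "A \<in> Units (ring_mat TYPE(complex) n ())" by (rule det_non_zero_imp_unit[OF A])
  then obtain C where C: "C \<in> carrier_mat n n" "C * A = 1\<^sub>m n" "A * C = 1\<^sub>m n"
    by (auto simp: Units_def ring_mat_def)
  have one: "(\<Sum>z\<in>S. X $$ (g i, g z) * Y $$ (g z, g k)) = (if i = k then 1 else 0)"
    if "X \<in> carrier_mat n n" "Y \<in> carrier_mat n n" "X * Y = 1\<^sub>m n" "i \<in> S" "k \<in> S"
    for X Y :: "complex Matrix.mat" and i k
    using mult_entry[OF that(1,2,4,5)] that(3) g_lt[OF that(4)] g_lt[OF that(5)] g_eq[OF that(4,5)]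
    by simp
  have M_sum: "(\<Sum>z\<in>S. M i z * C $$ (g z, g k)) = (\<Sum>z\<in>S. A $$ (g i, g z) * C $$ (g z, g k))"
    "(\<Sum>z\<in>S. C $$ (g i, g z) * M z k) = (\<Sum>z\<in>S. C $$ (g i, g z) * A $$ (g z, g k))"
    if "i \<in> S" "k \<in> S" for i k
    by (rule sum.cong[OF refl], simp add: M_eq that)+
  have inverse: "(\<Sum>z\<in>S. M i z * C $$ (g z, g k)) = (if i = k then 1 else 0)"
    "(\<Sum>z\<in>S. C $$ (g i, g z) * M z k) = (if i = k then 1 else 0)" if "i \<in> S" "k \<in> S" for i k
    using trans[OF M_sum(1) one[OF A C(1,3)]] trans[OF M_sum(2) one[OF C(1) A C(2)]] that by blast+
  show ?thesis unfolding is_inverse_on_def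
    by (intro exI[of _ "\<lambda>x y. C $$ (g x, g y)"] conjI ballI) (simp_all only: inverse)
qed

lemma inv_norm_on_add_le:
  assumes S: "finite S" and A: "inv_norm_on S A \<le> ereal K"
    and E: "\<And>v. l2norm_on S (mat_apply_on S E v) \<le> e * l2norm_on S v" and eK: "e * K < 1"
  shows "inv_norm_on S (\<lambda>i k. A i k + E i k) \<le> ereal (K / (1 - e * K))"
proof -
  obtain B where B: "is_inverse_on S A B" "0 \<le> K" "\<And>w. l2norm_on S (mat_apply_on S B w) \<le> K * l2norm_on S w"
    using A unfolding inv_norm_on_le_iff[OF S] by blast
  let ?A' = "\<lambda>i k. A i k + E i k"
  have pos: "0 < 1 - e * K" using eK by simp
  have lower: "(1 - e * K) * l2norm_on S v \<le> K * l2norm_on S (mat_apply_on S ?A' v)" for v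
  proof -
    have "l2norm_on S v = l2norm_on S (mat_apply_on S B (mat_apply_on S A v))"
      by (rule l2norm_on_cong) (simp add: mat_apply_on_inverse[OF S B(1)])
    also have "\<dots> \<le> K * l2norm_on S (mat_apply_on S A v)" by (rule B(3))
    also have "l2norm_on S (mat_apply_on S A v) =
        l2norm_on S (\<lambda>i. mat_apply_on S ?A' v i - mat_apply_on S E v i)"
      by (rule l2norm_on_cong) (simp add: mat_apply_on_add)
    also have "\<dots> \<le> l2norm_on S (mat_apply_on S ?A' v) + e * l2norm_on S v"
      using l2norm_on_diff_le[of S "mat_apply_on S ?A' v" "mat_apply_on S E v"] E[of v] by linarith
    finally have "l2norm_on S v \<le> K * (l2norm_on S (mat_apply_on S ?A' v) + e * l2norm_on S v)"
      using B(2) by (simp add: mult_left_mono)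
    thus ?thesis by (simp add: algebra_simps)
  qed
  have "\<exists>B'. is_inverse_on S ?A' B'"
  proof (rule is_inverse_on_exists[OF S])
    fix v assume "\<forall>i\<in>S. mat_apply_on S ?A' v i = 0"
    hence "l2norm_on S (mat_apply_on S ?A' v) = 0" using l2norm_on_eq_0_iff[OF S] by blast
    hence "(1 - e * K) * l2norm_on S v \<le> 0" using lower[of v] by simp
    hence "l2norm_on S v = 0" using pos l2norm_on_nonneg[of S v] by (simp add: mult_le_0_iff)
    thus "\<forall>i\<in>S. v i = 0" using l2norm_on_eq_0_iff[OF S] by blast
  qed
  then obtain B' where B': "is_inverse_on S ?A' B'" by blast
  have "l2norm_on S (mat_apply_on S B' w) \<le> K / (1 - e * K) * l2norm_on S w" for w
  proof -
    have "l2norm_on S (mat_apply_on S ?A' (mat_apply_on S B' w)) = l2norm_on S w"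
      by (rule l2norm_on_cong) (simp add: mat_apply_on_inverse[OF S is_inverse_on_sym[OF B']])
    with lower[of "mat_apply_on S B' w"] pos show ?thesis by (simp add: field_simps)
  qed
  thus ?thesis unfolding inv_norm_on_le_iff[OF S] using B' B(2) pos by auto
qed

definition pencil :: "('i \<Rightarrow> 'i \<Rightarrow> complex) \<Rightarrow> ('i \<Rightarrow> real) \<Rightarrow> real \<Rightarrow> 'i \<Rightarrow> 'i \<Rightarrow> complex" where
  "pencil A y \<theta> i k = A i k + diag_on (\<lambda>i. complex_of_real (\<theta> * y i)) i k"

lemma pencil_shift:
  "pencil A y \<theta> = (\<lambda>i k. pencil A y \<theta>' i k + diag_on (\<lambda>i. complex_of_real ((\<theta> - \<theta>') * y i)) i k)"
  by (simp add: fun_eq_iff pencil_def diag_on_def algebra_simps)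

lemma sum_diag_on_mult:
  assumes "finite S" "i \<in> S"
  shows "(\<Sum>z\<in>S. diag_on a i z * diag_on b z k) = (if i = k then a i * b i else 0)"
proof -
  have "(\<Sum>z\<in>S. diag_on a i z * diag_on b z k) = (\<Sum>z\<in>S. if z = i then (if i = k then a i * b i else 0) else 0)"
    unfolding diag_on_def by (intro sum.cong) auto
  thus ?thesis using assms by simp
qed

lemma is_inverse_on_diag_on:
  assumes "finite S" "\<And>i. i \<in> S \<Longrightarrow> d i * d' i = 1"
  shows "is_inverse_on S (diag_on d) (diag_on d')"
proof -
  have "d' i * d i = 1" if "i \<in> S" for i using assms(2)[OF that] by (simp add: mult.commute)
  thus ?thesis unfolding is_inverse_on_def using assms by (simp add: sum_diag_on_mult)
qed

lemma inv_norm_on_pencil_le: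
  assumes S: "finite S" and y: "\<And>i. \<bar>y i\<bar> = 1"
    and le: "inv_norm_on S (pencil A y \<theta>') \<le> ereal c" and small: "\<bar>\<theta> - \<theta>'\<bar> * c < 1"
  shows "inv_norm_on S (pencil A y \<theta>) \<le> ereal (c / (1 - \<bar>\<theta> - \<theta>'\<bar> * c))"
proof -
  have "l2norm_on S (mat_apply_on S (diag_on (\<lambda>i. complex_of_real ((\<theta> - \<theta>') * y i))) v)
      = \<bar>\<theta> - \<theta>'\<bar> * l2norm_on S v" for v
    by (rule l2norm_on_diag_on[OF S]) (simp_all add: abs_mult y del: of_real_mult of_real_diff)
  thus ?thesis
    unfolding pencil_shift[of A y \<theta> \<theta>'] by (intro inv_norm_on_add_le[OF S le _ small]) simp
qed

lemma inv_norm_on_pencil_large: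
  assumes S: "finite S" and y: "\<And>i. \<bar>y i\<bar> = 1" and big: "opnorm_on S A < \<bar>\<theta>\<bar>"
  shows "inv_norm_on S (pencil A y \<theta>) \<le> ereal (1 / (\<bar>\<theta>\<bar> - opnorm_on S A))"
proof -
  have \<theta>: "\<theta> \<noteq> 0" using big opnorm_on_nonneg[OF S, of A] by auto
  let ?D = "diag_on (\<lambda>i. complex_of_real (\<theta> * y i))"
  have "is_inverse_on S ?D (diag_on (\<lambda>i. complex_of_real (y i / \<theta>)))"
  proof (rule is_inverse_on_diag_on[OF S])
    fix i
    have "\<theta> * y i * (y i / \<theta>) = y i * y i" using \<theta> by simp
    also have "\<dots> = 1" using abs_mult_self_eq[of "y i"] y[of i] by simp
    finally show "complex_of_real (\<theta> * y i) * complex_of_real (y i / \<theta>) = 1"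
      by (simp only: of_real_mult[symmetric]) simp
  qed
  moreover have "l2norm_on S (mat_apply_on S (diag_on (\<lambda>i. complex_of_real (y i / \<theta>))) w)
      = (1 / \<bar>\<theta>\<bar>) * l2norm_on S w" for w
    by (rule l2norm_on_diag_on[OF S]) (simp_all add: abs_divide y del: of_real_divide)
  ultimately have D: "inv_norm_on S ?D \<le> ereal (1 / \<bar>\<theta>\<bar>)"
    unfolding inv_norm_on_le_iff[OF S] by auto
  have "pencil A y \<theta> = (\<lambda>i k. ?D i k + A i k)"
    by (simp add: fun_eq_iff pencil_def add.commute)
  moreover have "opnorm_on S A * (1 / \<bar>\<theta>\<bar>) < 1" using big \<theta> by (simp add: field_simps)
  ultimately have "inv_norm_on S (pencil A y \<theta>)
      \<le> ereal ((1 / \<bar>\<theta>\<bar>) / (1 - opnorm_on S A * (1 / \<bar>\<theta>\<bar>)))"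
    using inv_norm_on_add_le[OF S D l2norm_on_mat_apply_le[OF S]] by simp
  also have "(1 / \<bar>\<theta>\<bar>) / (1 - opnorm_on S A * (1 / \<bar>\<theta>\<bar>)) = 1 / (\<bar>\<theta>\<bar> - opnorm_on S A)"
    using \<theta> by (simp add: field_simps)
  finally show ?thesis .
qed

lemma inv_norm_on_pencil_gt_near:
  assumes S: "finite S" and y: "\<And>i. \<bar>y i\<bar> = 1" and c: "0 < c"
    and gt: "ereal (2 * c) < inv_norm_on S (pencil A y \<theta>)" and near: "\<bar>\<theta>' - \<theta>\<bar> \<le> 1 / (2 * c)"
  shows "ereal c < inv_norm_on S (pencil A y \<theta>')"
proof (rule ccontr)
  assume "\<not> ereal c < inv_norm_on S (pencil A y \<theta>')"
  hence le: "inv_norm_on S (pencil A y \<theta>') \<le> ereal c" by simp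
  have small: "\<bar>\<theta> - \<theta>'\<bar> * c \<le> 1 / 2"
    using mult_right_mono[OF near less_imp_le[OF c]] c by (simp add: abs_minus_commute)
  have "inv_norm_on S (pencil A y \<theta>) \<le> ereal (c / (1 - \<bar>\<theta> - \<theta>'\<bar> * c))"
    using small by (intro inv_norm_on_pencil_le[OF S y le]) simp
  also have "c / (1 - \<bar>\<theta> - \<theta>'\<bar> * c) \<le> 2 * c"
    using small c by (simp add: divide_le_eq algebra_simps)
  finally show False using gt by simp
qed

lemma open_inv_norm_on_pencil_gt:
  assumes S: "finite S" and y: "\<And>i. \<bar>y i\<bar> = 1" and c: "0 < c"
  shows "open {\<theta>. ereal c < inv_norm_on S (pencil A y \<theta>)}"
  unfolding open_dist
proof (intro ballI)
  fix \<theta> assume "\<theta> \<in> {\<theta>. ereal c < inv_norm_on S (pencil A y \<theta>)}"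
  then obtain r where r: "c < r" "ereal r < inv_norm_on S (pencil A y \<theta>)"
    using ereal_dense2 by (fastforce simp del: ereal_less_eq)
  define e where "e = (r - c) / (r * c)"
  have e: "0 < e" unfolding e_def using r(1) c by simp
  have "\<theta>' \<in> {\<theta>. ereal c < inv_norm_on S (pencil A y \<theta>)}" if "dist \<theta>' \<theta> < e" for \<theta>'
  proof (rule ccontr)
    assume "\<theta>' \<notin> {\<theta>. ereal c < inv_norm_on S (pencil A y \<theta>)}"
    hence le: "inv_norm_on S (pencil A y \<theta>') \<le> ereal c" by simp
    define t where "t = \<bar>\<theta> - \<theta>'\<bar>"
    have "t * (r * c) < r - c"
      using that r(1) c unfolding t_def e_def dist_real_def by (simp add: abs_minus_commute pos_less_divide_eq)
    hence key: "c < r * (1 - t * c)" by (simp add: algebra_simps)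
    hence "0 < r * (1 - t * c)" using c by linarith
    hence tc: "t * c < 1" using r(1) c by (simp add: zero_less_mult_iff)
    have lt: "c / (1 - t * c) < r" using key tc by (simp add: pos_divide_less_eq mult.commute)
    have "inv_norm_on S (pencil A y \<theta>) \<le> ereal (c / (1 - t * c))"
      unfolding t_def by (rule inv_norm_on_pencil_le[OF S y le]) (use tc t_def in simp)
    also have "\<dots> < ereal r" using lt by simp
    finally show False using r(2) by simp
  qed
  thus "\<exists>e>0. \<forall>\<theta>'. dist \<theta>' \<theta> < e \<longrightarrow> \<theta>' \<in> {\<theta>. ereal c < inv_norm_on S (pencil A y \<theta>)}"
    using e by blast
qed

lemma bounded_inv_norm_on_pencil_gt:
  assumes S: "finite S" and y: "\<And>i. \<bar>y i\<bar> = 1" and c: "0 < c"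
  shows "bounded {\<theta>. ereal c < inv_norm_on S (pencil A y \<theta>)}"
proof (rule bounded_subset[OF bounded_cball[of 0 "opnorm_on S A + 1 / c"]], rule subsetI, rule ccontr)
  fix \<theta> assume \<theta>: "\<theta> \<in> {\<theta>. ereal c < inv_norm_on S (pencil A y \<theta>)}" "\<theta> \<notin> cball 0 (opnorm_on S A + 1 / c)"
  hence big: "1 / c < \<bar>\<theta>\<bar> - opnorm_on S A" by simp
  moreover have "0 < 1 / c" using c by simp
  ultimately have pos: "0 < \<bar>\<theta>\<bar> - opnorm_on S A" by linarith
  have "inv_norm_on S (pencil A y \<theta>) \<le> ereal (1 / (\<bar>\<theta>\<bar> - opnorm_on S A))"
    by (rule inv_norm_on_pencil_large[OF S y]) (use pos in linarith)
  also have "1 / (\<bar>\<theta>\<bar> - opnorm_on S A) < 1 / (1 / c)"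
    by (rule divide_strict_left_mono[OF big]) (use pos c in simp_all)
  also have "1 / (1 / c) = c" by simp
  finally show False using \<theta>(1) by simp
qed

lemma cover_by_intervals:
  fixes B B' :: "real set"
  assumes h: "0 < h" and B': "B' \<in> sets lborel" "bounded B'"
    and near: "\<And>x y. x \<in> B \<Longrightarrow> \<bar>y - x\<bar> \<le> h \<Longrightarrow> y \<in> B'"
  obtains I where "real (length I) * h \<le> measure lborel B'" "\<forall>(a, b)\<in>set I. b - a = h"
    "B \<subseteq> (\<Union>(a, b)\<in>set I. {a..b})"
proof -
  define cell where "cell k = {real_of_int k * h ..< (real_of_int k + 1) * h}" for k :: int
  have cell_iff: "x \<in> cell k \<longleftrightarrow> \<lfloor>x / h\<rfloor> = k" for x k
    unfolding cell_def floor_eq_iff using h by (simp add: pos_le_divide_eq pos_divide_less_eq)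
  define K where "K = (\<lambda>x. \<lfloor>x / h\<rfloor>) ` B"
  obtain R where R: "\<And>x. x \<in> B' \<Longrightarrow> \<bar>x\<bar> \<le> R" using B'(2) unfolding bounded_real by blast
  have "K \<subseteq> {\<lfloor>-R / h\<rfloor> .. \<lfloor>R / h\<rfloor>}"
  proof
    fix k assume "k \<in> K"
    then obtain x where x: "x \<in> B" "k = \<lfloor>x / h\<rfloor>" unfolding K_def by blast
    have lo: "-R \<le> x" and hi: "x \<le> R" using R[OF near[OF x(1), of x]] h by auto
    have "-R / h \<le> x / h" "x / h \<le> R / h"
      by (rule divide_right_mono[OF lo], use h in simp) (rule divide_right_mono[OF hi], use h in simp)
    thus "k \<in> {\<lfloor>-R / h\<rfloor> .. \<lfloor>R / h\<rfloor>}" using x(2) by (auto intro: floor_mono)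
  qed
  hence K: "finite K" by (rule finite_subset) simp
  have cell_sub: "cell k \<subseteq> B'" if k: "k \<in> K" for k
  proof
    fix y assume y: "y \<in> cell k"
    obtain x where x: "x \<in> B" "k = \<lfloor>x / h\<rfloor>" using k unfolding K_def by blast
    hence "x \<in> cell k" by (simp add: cell_iff)
    hence "\<bar>y - x\<bar> \<le> h" using y unfolding cell_def by (auto simp: algebra_simps abs_le_iff)
    thus "y \<in> B'" by (rule near[OF x(1)])
  qed
  have cell_sets: "cell k \<in> sets lborel" for k unfolding cell_def by simp
  have cell_measure: "measure lborel (cell k) = h" for k unfolding cell_def using h by (simp add: algebra_simps)
  have disjoint: "disjoint_family_on cell K" by (auto simp: disjoint_family_on_def cell_iff)
  have "measure lborel (\<Union>k\<in>K. cell k) = (\<Sum>k\<in>K. measure lborel (cell k))"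
    using h by (intro measure_finite_Union[OF K _ disjoint]) (auto simp: cell_sets cell_def mult_right_mono)
  hence "real (card K) * h = measure lborel (\<Union>k\<in>K. cell k)" by (simp add: cell_measure)
  also have "\<dots> \<le> measure lborel B'"
  proof (rule measure_mono_fmeasurable)
    show "(\<Union>k\<in>K. cell k) \<subseteq> B'" using cell_sub by blast
    show "(\<Union>k\<in>K. cell k) \<in> sets lborel" using K cell_sets by blast
    show "B' \<in> fmeasurable lborel" using B' emeasure_bounded_finite[OF B'(2)] by (intro fmeasurableI) simp_all
  qed
  finally have card: "real (card K) * h \<le> measure lborel B'" .
  define I where "I = map (\<lambda>k. (real_of_int k * h, (real_of_int k + 1) * h)) (sorted_list_of_set K)"
  have set_I: "set I = (\<lambda>k. (real_of_int k * h, (real_of_int k + 1) * h)) ` K"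
    unfolding I_def using K by simp
  have "B \<subseteq> (\<Union>(a, b)\<in>set I. {a..b})"
  proof
    fix x assume "x \<in> B"
    hence "\<lfloor>x / h\<rfloor> \<in> K" unfolding K_def by blast
    moreover have "x \<in> {real_of_int \<lfloor>x / h\<rfloor> * h .. (real_of_int \<lfloor>x / h\<rfloor> + 1) * h}"
      using cell_iff[of x "\<lfloor>x / h\<rfloor>"] unfolding cell_def by simp
    ultimately show "x \<in> (\<Union>(a, b)\<in>set I. {a..b})" unfolding set_I by blast
  qed
  moreover have "\<forall>(a, b)\<in>set I. b - a = h" unfolding set_I by (auto simp: algebra_simps)
  moreover have "length I = card K" unfolding I_def by simp
  ultimately show ?thesis using card by (intro that[of I]) simp_all
qed

lemma finite_vec_box:
  assumes "\<And>i. finite (F i)"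
  shows "finite {x. \<forall>i. (x :: 'a^'n) $ i \<in> F i}"
proof (rule finite_subset)
  show "{x. \<forall>i. (x :: 'a^'n) $ i \<in> F i} \<subseteq> vec_lambda ` PiE UNIV F"
  proof
    fix x :: "'a^'n" assume "x \<in> {x. \<forall>i. x $ i \<in> F i}"
    hence "vec_nth x \<in> PiE UNIV F" by (simp add: PiE_iff)
    thus "x \<in> vec_lambda ` PiE UNIV F" by (rule rev_image_eqI) simp
  qed
  show "finite (vec_lambda ` PiE UNIV F)" using assms by (intro finite_imageI finite_PiE) auto
qed

lemma abs_le_maxnorm: "\<bar>x $ i\<bar> \<le> maxnorm (x :: ('a::{linorder,abs})^'n)"
  unfolding maxnorm_def by (rule Max_ge) auto

lemma finite_trunc_idx: "finite (trunc_idx N j0 :: ('m::finite, 'n::finite) idx set)"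
proof (rule finite_subset)
  show "trunc_idx N j0 \<subseteq> {l :: int^'m. \<forall>i. l $ i \<in> {- int N .. int N}}
      \<times> {j. \<forall>i. j $ i \<in> {j0 $ i - int N .. j0 $ i + int N}} \<times> {0, 1}"
  proof
    fix x assume x: "x \<in> (trunc_idx N j0 :: ('m, 'n) idx set)"
    obtain l j a where la: "x = (l, j, a)" by (cases x)
    have "maxnorm l \<le> int N" "maxnorm (j - j0) \<le> int N" "a \<in> {0, 1}"
      using x unfolding la trunc_idx_def by auto
    hence "l $ i \<in> {- int N .. int N}" "j $ k \<in> {j0 $ k - int N .. j0 $ k + int N}" for i k
      using abs_le_maxnorm[of l i] abs_le_maxnorm[of "j - j0" k] by (auto simp: abs_le_iff)
    thus "x \<in> {l :: int^'m. \<forall>i. l $ i \<in> {- int N .. int N}}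
      \<times> {j. \<forall>i. j $ i \<in> {j0 $ i - int N .. j0 $ i + int N}} \<times> {0, 1}"
      using \<open>a \<in> {0, 1}\<close> unfolding la by blast
  qed
  show "finite ({l :: int^'m. \<forall>i. l $ i \<in> {- int N .. int N}}
      \<times> {j. \<forall>i. j $ i \<in> {j0 $ i - int N .. j0 $ i + int N}} \<times> {0 :: nat, 1})"
    by (intro finite_cartesian_product finite_vec_box) auto
qed

definition idx_sign :: "('m, 'n) idx \<Rightarrow> real" where
  "idx_sign x = (case x of (l, j, a) \<Rightarrow> if a = 0 then -1 else 1)"

lemma abs_idx_sign: "\<bar>idx_sign x\<bar> = 1"
  by (simp add: idx_sign_def split: prod.split)

lemma Amat_eq_pencil:
  "Amat wbar V f u \<epsilon> lam \<theta> = pencil (Amat wbar V f u \<epsilon> lam 0) idx_sign \<theta>"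
proof -
  have "Amat wbar V f u \<epsilon> lam \<theta> x y = pencil (Amat wbar V f u \<epsilon> lam 0) idx_sign \<theta> x y" for x y
    by (cases x) (auto simp: Amat_def pencil_def diag_on_def idx_sign_def)
  thus ?thesis by (intro ext)
qed

theorem lemma6p4:
  fixes wbar :: "(real^'nu)" and V :: "(real^'d) \<Rightarrow> real"
    and f :: "(real^'nu) \<times> (real^'d) \<times> real \<Rightarrow> real"
    and uplus :: "real \<Rightarrow> real \<Rightarrow> (real^'nu) \<times> (real^'d) \<Rightarrow> complex"
    and \<tau> \<epsilon>0 s :: real and r :: nat
  assumes wbar: "maxnorm wbar \<le> 1"
    and tau: "\<tau> > 0" and eps0: "\<epsilon>0 > 0"
    and r: "r \<ge> 1"
    and V: "Ck r V" "torus_periodic V"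
    and f: "Ck r f" "periodic_fun3 f"
    and s: "s > real (CARD('d) + CARD('nu)) / 2"
    and u: "\<And>\<epsilon> lam. \<epsilon> \<in> {0..\<epsilon>0} \<Longrightarrow> lam \<in> {1/2..3/2} \<Longrightarrow> in_Hs s (uplus \<epsilon> lam)"
  shows "\<forall>(N::nat) (j0::(int^'d)) \<epsilon> lam. N \<ge> 1 \<longrightarrow> \<epsilon> \<in> {0..\<epsilon>0} \<longrightarrow> lam \<in> {1/2..3/2} \<longrightarrow>
     (let M = measure lborel (B02 \<tau> wbar V f (uplus \<epsilon> lam) N j0 \<epsilon> lam) in
      \<exists>I :: (real \<times> real) list.
         real (length I) \<le> 2 * M * real N powr \<tau> \<and>
         (\<forall>(a,b)\<in>set I. b - a \<le> real N powr (-\<tau>)) \<and>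
         B0 \<tau> wbar V f (uplus \<epsilon> lam) N j0 \<epsilon> lam \<subseteq> (\<Union>(a,b)\<in>set I. {a..b}))"
proof (intro allI impI)
  fix N :: nat and j0 :: "int^'d" and \<epsilon> lam :: real
  assume "N \<ge> 1"
  define P where "P = real N powr \<tau>"
  have P: "0 < P" using \<open>N \<ge> 1\<close> unfolding P_def by simp
  define S where "S = (trunc_idx N j0 :: ('nu, 'd) idx set)"
  define A0 where "A0 = Amat wbar V f (uplus \<epsilon> lam) \<epsilon> lam 0"
  define bad where "bad c = {\<theta>. ereal c < inv_norm_on S (pencil A0 idx_sign \<theta>)}" for c
  have S: "finite S" unfolding S_def by (rule finite_trunc_idx)
  have Amat: "Amat wbar V f (uplus \<epsilon> lam) \<epsilon> lam \<theta> = pencil A0 idx_sign \<theta>" for \<theta>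
    unfolding A0_def by (rule Amat_eq_pencil)
  have B0: "B0 \<tau> wbar V f (uplus \<epsilon> lam) N j0 \<epsilon> lam = bad P"
    and B02: "B02 \<tau> wbar V f (uplus \<epsilon> lam) N j0 \<epsilon> lam = bad (P / 2)"
    by (simp_all add: B0_def B02_def bad_def S_def P_def Amat)
  have "open (bad (P / 2))"
    unfolding bad_def by (rule open_inv_norm_on_pencil_gt[OF S abs_idx_sign]) (use P in simp)
  hence measurable: "bad (P / 2) \<in> sets lborel" unfolding sets_lborel by (rule borel_open)
  have bounded: "bounded (bad (P / 2))"
    unfolding bad_def by (rule bounded_inv_norm_on_pencil_gt[OF S abs_idx_sign]) (use P in simp)
  have near: "y \<in> bad (P / 2)" if "x \<in> bad P" "\<bar>y - x\<bar> \<le> 1 / P" for x y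
    using inv_norm_on_pencil_gt_near[where y = idx_sign and c = "P / 2" and A = A0 and \<theta> = x and \<theta>' = y,
      OF S abs_idx_sign] that P by (simp add: bad_def)
  have "0 < 1 / P" using P by simp
  then obtain I where I: "real (length I) * (1 / P) \<le> measure lborel (bad (P / 2))"
    "\<forall>(a, b)\<in>set I. b - a = 1 / P" "bad P \<subseteq> (\<Union>(a, b)\<in>set I. {a..b})"
    using measurable bounded near by (rule cover_by_intervals)
  have "real (length I) \<le> 2 * measure lborel (bad (P / 2)) * P"
    using I(1) P by (simp add: field_simps)
  moreover have "\<forall>(a, b)\<in>set I. b - a \<le> real N powr - \<tau>"
    using I(2) unfolding P_def by (auto simp: powr_minus_divide)
  ultimately show "let M = measure lborel (B02 \<tau> wbar V f (uplus \<epsilon> lam) N j0 \<epsilon> lam) in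
      \<exists>I :: (real \<times> real) list. real (length I) \<le> 2 * M * real N powr \<tau>
        \<and> (\<forall>(a,b)\<in>set I. b - a \<le> real N powr (-\<tau>))
        \<and> B0 \<tau> wbar V f (uplus \<epsilon> lam) N j0 \<epsilon> lam \<subseteq> (\<Union>(a,b)\<in>set I. {a..b})"
    unfolding Let_def B0 B02 P_def[symmetric] using I(3) by blast
qed

end
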